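(* Let $G$ be a finitely generated group, $(X,\mathcal{U})$ a first countable, locally compact, paracompact, Hausdorff uniform space, and $\Phi\in Act(G,X)$ an action with a proper expansive entourage $A$. For a non-empty finite set $F\subset G$ let $V_F(A)=\{(x,y)\in X\times X: (\Phi_g(x),\Phi_g(y))\in A \text{ for all } g\in F\}$. Then for any wide $U\in\mathcal{U}$ there exists a non-empty finite set $F\subset G$ with $V_F(A)\subset U$.
   Context: $X$ carries the topology induced by $\mathcal{U}$. $Act(G,X)$: maps $\Phi:G\times X\to X$ with each $\Phi_g$ a uniform equivalence, $\Phi_e=\mathrm{id}$, $\Phi_{g_1g_2}=\Phi_{g_1}\circ\Phi_{g_2}$. A closed entourage $A$ is an expansive entourage for $\Phi$ if for any distinct $x,y$ there is $g\in G$ with $(\Phi_g(x),\Phi_g(y))\notin A$. An entourage $M$ is proper if for every compact $K\subset X$ the set $M[K]=\bigcup_{x\in K}\{y:(x,y)\in M\}$ is compact. An entourage $U$ is wide if there is a compact $K\subset X$ with $U\cup(K\times X)=X\times X$. *)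

theory Defs
  imports "HOL-Analysis.Analysis" "HOL-Algebra.Generated_Groups"
begin

definition fin_gen_group :: "('g, 'b) monoid_scheme \<Rightarrow> bool" where
  "fin_gen_group G \<longleftrightarrow> group G \<and>
     (\<exists>S. finite S \<and> S \<subseteq> carrier G \<and> generate G S = carrier G)"

definition entourage :: "('a::uniform_space \<times> 'a) set \<Rightarrow> bool" where
  "entourage E \<longleftrightarrow> eventually (\<lambda>p. p \<in> E) uniformity"

definition uniform_equivalence :: "('a::uniform_space \<Rightarrow> 'a) \<Rightarrow> bool" where
  "uniform_equivalence f \<longleftrightarrow> bij f \<and> uniformly_continuous_on UNIV f
      \<and> uniformly_continuous_on UNIV (inv_into UNIV f)"

definition is_action :: "('g, 'b) monoid_scheme \<Rightarrow> ('g \<Rightarrow> 'a::uniform_space \<Rightarrow> 'a) \<Rightarrow> bool" where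
  "is_action G \<Phi> \<longleftrightarrow>
     (\<forall>g\<in>carrier G. uniform_equivalence (\<Phi> g)) \<and>
     \<Phi> \<one>\<^bsub>G\<^esub> = id \<and>
     (\<forall>g1\<in>carrier G. \<forall>g2\<in>carrier G. \<Phi> (g1 \<otimes>\<^bsub>G\<^esub> g2) = \<Phi> g1 \<circ> \<Phi> g2)"

definition expansive_entourage ::
  "('g, 'b) monoid_scheme \<Rightarrow> ('g \<Rightarrow> 'a::uniform_space \<Rightarrow> 'a) \<Rightarrow> ('a \<times> 'a) set \<Rightarrow> bool" where
  "expansive_entourage G \<Phi> A \<longleftrightarrow> entourage A \<and> closed A \<and>
     (\<forall>x y. x \<noteq> y \<longrightarrow> (\<exists>g\<in>carrier G. (\<Phi> g x, \<Phi> g y) \<notin> A))"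

(* M[K] = M `` K *)
definition proper_entourage :: "('a::uniform_space \<times> 'a) set \<Rightarrow> bool" where
  "proper_entourage M \<longleftrightarrow> entourage M \<and> (\<forall>K. compact K \<longrightarrow> compact (M `` K))"

definition wide_entourage :: "('a::uniform_space \<times> 'a) set \<Rightarrow> bool" where
  "wide_entourage U \<longleftrightarrow> entourage U \<and> (\<exists>K. compact K \<and> U \<union> (K \<times> UNIV) = UNIV)"

definition V_F :: "('g \<Rightarrow> 'a \<Rightarrow> 'a) \<Rightarrow> 'g set \<Rightarrow> ('a \<times> 'a) set \<Rightarrow> ('a \<times> 'a) set" where
  "V_F \<Phi> F A = {(x, y). \<forall>g\<in>F. (\<Phi> g x, \<Phi> g y) \<in> A}"

definition locally_compact :: "'a::topological_space itself \<Rightarrow> bool" where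
  "locally_compact _ \<longleftrightarrow> locally_compact_space (euclidean :: 'a topology)"

definition paracompact :: "'a::topological_space itself \<Rightarrow> bool" where
  "paracompact _ \<longleftrightarrow>
     (\<forall>\<C> :: 'a set set. (\<forall>C\<in>\<C>. open C) \<and> \<Union>\<C> = UNIV \<longrightarrow>
        (\<exists>\<D> :: 'a set set. (\<forall>D\<in>\<D>. open D) \<and> \<Union>\<D> = UNIV \<and>
           (\<forall>D\<in>\<D>. \<exists>C\<in>\<C>. D \<subseteq> C) \<and>
           (\<forall>x. \<exists>N. open N \<and> x \<in> N \<and> finite {D\<in>\<D>. D \<inter> N \<noteq> {}})))"

end

theory Submission
  imports Defs
begin

(* Outside K \<times> X everything lies in U, so only pairs in K \<times> A[K] matter. Those not in the
   interior of U form a compact set avoiding the diagonal, which expansivity covers by the open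
   sets {(x, y). (\<Phi>\<^sub>g x, \<Phi>\<^sub>g y) \<notin> A}; a finite subcover, together with the identity of G,
   gives F. *)

lemma entourage_diag_in_interior:
  fixes U :: "('a::uniform_space \<times> 'a) set"
  assumes "entourage U"
  shows "(x, x) \<in> interior U"
proof -
  from assms obtain D where D: "eventually D uniformity"
      and D_comp: "\<And>x y z. D (x, y) \<Longrightarrow> D (y, z) \<Longrightarrow> (x, z) \<in> U"
    unfolding entourage_def by (rule uniformity_transE) auto
  have "eventually (\<lambda>y. D (x, y)) (nhds x)"
    unfolding eventually_nhds_uniformity using D by (rule eventually_mono) auto
  moreover have "eventually (\<lambda>y. D (y, x)) (nhds x)"
    unfolding eventually_nhds_uniformity
    using uniformity_sym[OF D] by (rule eventually_mono) auto
  ultimately have "eventually (\<lambda>y. D (x, y) \<and> D (y, x)) (nhds x)"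
    by (rule eventually_conj)
  then obtain N where N: "open N" "x \<in> N" "\<And>y. y \<in> N \<Longrightarrow> D (x, y) \<and> D (y, x)"
    unfolding eventually_nhds by blast
  have "N \<times> N \<subseteq> U" using N(3) D_comp by blast
  moreover have "open (N \<times> N)" using N(1) by (intro open_Times)
  ultimately show ?thesis using N(2) by (meson SigmaI interior_maximal subsetD)
qed

lemma uniform_equivalence_continuous:
  "uniform_equivalence f \<Longrightarrow> continuous_on UNIV f"
  unfolding uniform_equivalence_def by (blast intro: uniformly_continuous_imp_continuous)

lemma open_pairs_mapped_outside_closed:
  assumes "continuous_on UNIV f" and "closed A"
  shows "open {(x, y). (f x, f y) \<notin> A}"
proof -
  have "continuous_on UNIV (\<lambda>p. (f (fst p), f (snd p)))"
    by (intro continuous_on_Pair continuous_on_compose2[OF assms(1)] continuous_intros) auto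
  then have "closed ((\<lambda>p. (f (fst p), f (snd p))) -` A)"
    using assms(2) by (simp add: continuous_on_closed_vimage[OF closed_UNIV, simplified])
  moreover have "{(x, y). (f x, f y) \<notin> A} = - ((\<lambda>p. (f (fst p), f (snd p))) -` A)"
    by auto
  ultimately show ?thesis by (simp add: open_Compl)
qed

lemma V_F_insert:
  "V_F \<Phi> (insert g F) A = {(x, y). (\<Phi> g x, \<Phi> g y) \<in> A} \<inter> V_F \<Phi> F A"
  by (auto simp: V_F_def)

lemma expansive_finite_family_within_entourage:
  fixes \<Phi> :: "'i \<Rightarrow> 'a::uniform_space \<Rightarrow> 'a"
  assumes "entourage U" and "compact K" and "U \<union> (K \<times> UNIV) = UNIV"
    and "closed A" and "compact (A `` K)"
    and cont: "\<And>g. g \<in> I \<Longrightarrow> continuous_on UNIV (\<Phi> g)"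
    and exp: "\<And>x y. x \<noteq> y \<Longrightarrow> \<exists>g\<in>I. (\<Phi> g x, \<Phi> g y) \<notin> A"
  obtains F where "finite F" "F \<subseteq> I" "A \<inter> V_F \<Phi> F A \<subseteq> U"
proof -
  define C where "C = (K \<times> A `` K) - interior U"
  define W where "W g = {(x, y). (\<Phi> g x, \<Phi> g y) \<notin> A}" for g
  have "compact C"
    unfolding C_def using assms(2,5) by (intro compact_diff compact_Times) auto
  moreover have "open (W g)" if "g \<in> I" for g
    unfolding W_def using cont[OF that] assms(4) by (rule open_pairs_mapped_outside_closed)
  moreover have "C \<subseteq> (\<Union>g\<in>I. W g)"
  proof
    fix p assume "p \<in> C"
    then obtain x y where p: "p = (x, y)" "(x, y) \<notin> interior U"
      by (cases p) (auto simp: C_def)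
    then have "x \<noteq> y" using entourage_diag_in_interior[OF assms(1)] by auto
    with exp p(1) show "p \<in> (\<Union>g\<in>I. W g)" by (auto simp: W_def)
  qed
  ultimately obtain F where F: "F \<subseteq> I" "finite F" "C \<subseteq> (\<Union>g\<in>F. W g)"
    by (rule compactE_image)
  have "A \<inter> V_F \<Phi> F A \<subseteq> U"
  proof (clarify, rule ccontr)
    fix x y assume xy: "(x, y) \<in> A" "(x, y) \<in> V_F \<Phi> F A" "(x, y) \<notin> U"
    then have "x \<in> K" using assms(3) by blast
    with xy have "(x, y) \<in> C" using interior_subset by (fastforce simp: C_def)
    with F(3) xy(2) show False by (auto simp: V_F_def W_def)
  qed
  with F show thesis using that by blast
qed

theorem lemma3p5:
  fixes G :: "('g, 'b) monoid_scheme"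
    and \<Phi> :: "'g \<Rightarrow> 'a::{uniform_space, first_countable_topology, t2_space} \<Rightarrow> 'a"
    and A U :: "('a \<times> 'a) set"
  assumes "fin_gen_group G"
    and "locally_compact TYPE('a)"
    and "paracompact TYPE('a)"
    and "is_action G \<Phi>"
    and "expansive_entourage G \<Phi> A"
    and "proper_entourage A"
    and "wide_entourage U"
  shows "\<exists>F. finite F \<and> F \<noteq> {} \<and> F \<subseteq> carrier G \<and> V_F \<Phi> F A \<subseteq> U"
proof -
  obtain K where K: "entourage U" "compact K" "U \<union> (K \<times> UNIV) = UNIV"
    using assms(7) by (auto simp: wide_entourage_def)
  have "compact (A `` K)" using assms(6) K(2) by (simp add: proper_entourage_def)
  moreover have "continuous_on UNIV (\<Phi> g)" if "g \<in> carrier G" for g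
    using assms(4) that by (simp add: is_action_def uniform_equivalence_continuous)
  ultimately obtain F where F: "finite F" "F \<subseteq> carrier G" "A \<inter> V_F \<Phi> F A \<subseteq> U"
    using K assms(5) unfolding expansive_entourage_def
    by (metis expansive_finite_family_within_entourage)
  have "\<Phi> \<one>\<^bsub>G\<^esub> = id" and "\<one>\<^bsub>G\<^esub> \<in> carrier G"
    using assms(1,4) by (simp_all add: is_action_def fin_gen_group_def group.is_monoid)
  with F show ?thesis
    by (intro exI[of _ "insert \<one>\<^bsub>G\<^esub> F"]) (simp add: V_F_insert)
qed

end
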